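(* Let $\Gamma$ be a stable group with finite presentation $\langle X\mid R\rangle$, corresponding to the epimorphism $\pi:\mathbb{F}\twoheadrightarrow\Gamma$ from the free group $\mathbb{F}$ on $X$. If $\pi$ is not an isomorphism, then for all $x\ge1$, $$\frac{1}{\|R\|}F_\Gamma^\pi(x)\le H_{\langle X\mid R\rangle}(x)\le F_\Gamma^\pi(x)\,D_{\langle X\mid R\rangle}(F_\Gamma^\pi(x)).$$ If $\pi$ is an isomorphism, then $H_{\langle X\mid R\rangle}(x)=0$ for all $x\ge1$.
   Context: $\ker\pi$ is the normal closure of the finite set $R$. For finite $\Omega$, $d_\Omega(\sigma,\tau)=|\{\omega:\sigma(\omega)\ne\tau(\omega)\}|/|\Omega|$. For $E\subseteq\mathbb{F}$, a homomorphism $\phi:\mathbb{F}\to\mathrm{Sym}(\Omega)$ is a solution for $E$ if $E\subseteq\ker\phi$, and a $(\delta,E)$-almost-solution if $d_\Omega(\phi(r),\mathrm{id})<\delta$ for all $r\in E$; $\rho,\phi$ are $\epsilon$-close if $d_\Omega(\rho(x),\phi(x))<\epsilon$ for all $x\in X$. $\|E\|=\sum_{r\in E}|r|$ (word length in $X$). $F_\Gamma^\pi(x)$ is the infimum of $\|E\|/\delta$ over pairs with $\delta\in(0,1]$, $E\subseteq\ker\pi$ finite, such that every $(\delta,E)$-almost-solution is $x^{-1}$-close to a solution for $\ker\pi$; $\Gamma$ stable means such pairs exist for all $x$. $H_{\langle X\mid R\rangle}(x)$ is the infimum of $1/\delta$ over all $\delta>0$ such that every $(\delta,R)$-almost-solution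 is $x^{-1}$-close to a solution for $\ker\pi$. The Dehn function: $D_{\langle X\mid R\rangle}(n)$ is the maximum, over $w\in\ker\pi$ with $|w|\le n$, of the least $m$ such that $w=\prod_{i=1}^m u_ir_iu_i^{-1}$ with $u_i\in\mathbb{F}$, $r_i\in R^{\pm1}$; it is extended to $[1,\infty)$ by $D(x)=D(\lfloor x\rfloor)$. *)

theory Defs
  imports "HOL-Analysis.Analysis" "HOL-Combinatorics.Permutations"
begin

text \<open>Words over the generating set X: lists of signed letters (x, True) = x, (x, False) = x^-1.\<close>

type_synonym 'a word = "('a \<times> bool) list"

definition words :: "'a set \<Rightarrow> 'a word set" where
  "words X = {w. \<forall>l\<in>set w. fst l \<in> X}"

definition letter_inv :: "'a \<times> bool \<Rightarrow> 'a \<times> bool" where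
  "letter_inv l = (fst l, \<not> snd l)"

definition word_inv :: "'a word \<Rightarrow> 'a word" where
  "word_inv w = rev (map letter_inv w)"

definition reduced :: "'a word \<Rightarrow> bool" where
  "reduced w = (\<forall>i. Suc i < length w \<longrightarrow> w ! Suc i \<noteq> letter_inv (w ! i))"

definition free_step :: "'a word \<Rightarrow> 'a word \<Rightarrow> bool" where
  "free_step w w' = (\<exists>a b l. w = a @ [l, letter_inv l] @ b \<and> w' = a @ b)"

definition free_eq :: "'a word \<Rightarrow> 'a word \<Rightarrow> bool" where
  "free_eq = (symclp free_step)\<^sup>*\<^sup>*"

definition conj_prod :: "('a word \<times> 'a word \<times> bool) list \<Rightarrow> 'a word" where
  "conj_prod ps = concat (map (\<lambda>(u, r, e). u @ (if e then r else word_inv r) @ word_inv u) ps)"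

definition valid_pieces :: "'a set \<Rightarrow> 'a word set \<Rightarrow> ('a word \<times> 'a word \<times> bool) list \<Rightarrow> bool" where
  "valid_pieces X R ps = (\<forall>(u, r, e)\<in>set ps. u \<in> words X \<and> r \<in> R)"

definition kernel :: "'a set \<Rightarrow> 'a word set \<Rightarrow> 'a word set" where
  "kernel X R = {w \<in> words X. \<exists>ps. valid_pieces X R ps \<and> free_eq w (conj_prod ps)}"

definition pi_iso :: "'a set \<Rightarrow> 'a word set \<Rightarrow> bool" where
  "pi_iso X R = (\<forall>w\<in>kernel X R. free_eq w [])"

text \<open>A homomorphism F -> Sym(Omega) is given by the images of the generators.\<close>
definition is_hom :: "'a set \<Rightarrow> nat set \<Rightarrow> ('a \<Rightarrow> nat \<Rightarrow> nat) \<Rightarrow> bool" where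
  "is_hom X \<Omega> \<sigma> = (\<forall>x\<in>X. \<sigma> x permutes \<Omega>)"

definition eval_letter :: "('a \<Rightarrow> nat \<Rightarrow> nat) \<Rightarrow> 'a \<times> bool \<Rightarrow> nat \<Rightarrow> nat" where
  "eval_letter \<sigma> l = (if snd l then \<sigma> (fst l) else inv (\<sigma> (fst l)))"

definition eval_word :: "('a \<Rightarrow> nat \<Rightarrow> nat) \<Rightarrow> 'a word \<Rightarrow> nat \<Rightarrow> nat" where
  "eval_word \<sigma> w = foldr (\<lambda>l f. eval_letter \<sigma> l \<circ> f) w id"

definition dOmega :: "nat set \<Rightarrow> (nat \<Rightarrow> nat) \<Rightarrow> (nat \<Rightarrow> nat) \<Rightarrow> real" where
  "dOmega \<Omega> s t = real (card {\<omega>\<in>\<Omega>. s \<omega> \<noteq> t \<omega>}) / real (card \<Omega>)"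

definition is_solution :: "nat set \<Rightarrow> 'a word set \<Rightarrow> ('a \<Rightarrow> nat \<Rightarrow> nat) \<Rightarrow> bool" where
  "is_solution \<Omega> E \<phi> = (\<forall>r\<in>E. \<forall>\<omega>\<in>\<Omega>. eval_word \<phi> r \<omega> = \<omega>)"

definition almost_solution :: "nat set \<Rightarrow> real \<Rightarrow> 'a word set \<Rightarrow> ('a \<Rightarrow> nat \<Rightarrow> nat) \<Rightarrow> bool" where
  "almost_solution \<Omega> \<delta> E \<phi> = (\<forall>r\<in>E. dOmega \<Omega> (eval_word \<phi> r) id < \<delta>)"

definition eps_close :: "'a set \<Rightarrow> nat set \<Rightarrow> real \<Rightarrow> ('a \<Rightarrow> nat \<Rightarrow> nat) \<Rightarrow> ('a \<Rightarrow> nat \<Rightarrow> nat) \<Rightarrow> bool" where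
  "eps_close X \<Omega> \<epsilon> \<rho> \<phi> = (\<forall>x\<in>X. dOmega \<Omega> (\<rho> x) (\<phi> x) < \<epsilon>)"

definition good_pair :: "'a set \<Rightarrow> 'a word set \<Rightarrow> real \<Rightarrow> 'a word set \<Rightarrow> real \<Rightarrow> bool" where
  "good_pair X R \<delta> E \<epsilon> =
     (\<forall>\<Omega>::nat set. finite \<Omega> \<longrightarrow> (\<forall>\<rho>. is_hom X \<Omega> \<rho> \<longrightarrow> almost_solution \<Omega> \<delta> E \<rho> \<longrightarrow>
        (\<exists>\<phi>. is_hom X \<Omega> \<phi> \<and> is_solution \<Omega> (kernel X R) \<phi> \<and> eps_close X \<Omega> \<epsilon> \<rho> \<phi>)))"

definition set_norm :: "'a word set \<Rightarrow> real" where
  "set_norm E = real (\<Sum>r\<in>E. length r)"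

definition admissible_pairs :: "'a set \<Rightarrow> 'a word set \<Rightarrow> real \<Rightarrow> (real \<times> 'a word set) set" where
  "admissible_pairs X R x = {(\<delta>, E). 0 < \<delta> \<and> \<delta> \<le> 1 \<and> finite E \<and> E \<subseteq> kernel X R \<and>
       (\<forall>r\<in>E. reduced r) \<and> good_pair X R \<delta> E (1 / x)}"

definition F_fun :: "'a set \<Rightarrow> 'a word set \<Rightarrow> real \<Rightarrow> real" where
  "F_fun X R x = Inf ((\<lambda>(\<delta>, E). set_norm E / \<delta>) ` admissible_pairs X R x)"

definition stable :: "'a set \<Rightarrow> 'a word set \<Rightarrow> bool" where
  "stable X R = (\<forall>x::real. x > 0 \<longrightarrow> admissible_pairs X R x \<noteq> {})"

definition H_fun :: "'a set \<Rightarrow> 'a word set \<Rightarrow> real \<Rightarrow> real" where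
  "H_fun X R x = Inf {1 / \<delta> | \<delta>. 0 < \<delta> \<and> good_pair X R \<delta> R (1 / x)}"

definition area :: "'a set \<Rightarrow> 'a word set \<Rightarrow> 'a word \<Rightarrow> nat" where
  "area X R w = (LEAST m. \<exists>ps. length ps = m \<and> valid_pieces X R ps \<and> free_eq w (conj_prod ps))"

definition dehn_nat :: "'a set \<Rightarrow> 'a word set \<Rightarrow> nat \<Rightarrow> nat" where
  "dehn_nat X R n = Max {area X R w | w. w \<in> kernel X R \<and> reduced w \<and> length w \<le> n}"

definition dehn :: "'a set \<Rightarrow> 'a word set \<Rightarrow> real \<Rightarrow> real" where
  "dehn X R y = real (dehn_nat X R (nat \<lfloor>y\<rfloor>))"

end

theory Submission
  imports Defs
begin

text \<open>A word \<open>w\<close> in the kernel is freely equal to a product of \<open>area w\<close> conjugates of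
  relators. Conjugation preserves the number of points a permutation moves, and that number is
  subadditive under composition; hence a \<open>(\<delta>', R)\<close>-almost-solution is a
  \<open>(D \<delta>', E)\<close>-almost-solution whenever every member of \<open>E\<close> has area at most \<open>D\<close>.
  Starting from a pair \<open>(\<delta>, E)\<close> that nearly attains \<open>F\<close>, whose members have length at
  most \<open>\<lfloor>F\<rfloor>\<close> and thus area at most \<open>D = Dehn(F)\<close>, the value \<open>\<delta>/D\<close> witnesses
  \<open>H \<le> D/\<delta> \<le> D F\<close>. Conversely every \<open>\<delta>\<close> witnessing \<open>H\<close> makes \<open>(\<delta>, R)\<close> an admissible
  pair for \<open>F\<close>, so \<open>F \<le> \<parallel>R\<parallel>/\<delta>\<close>. If \<open>\<pi>\<close> is injective, every homomorphism already kills the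
  kernel, so every \<open>\<delta>\<close> witnesses \<open>H\<close>.\<close>

lemma eval_word_Nil [simp]: "eval_word \<sigma> [] = id"
  by (simp add: eval_word_def)

lemma eval_word_Cons [simp]: "eval_word \<sigma> (l # w) = eval_letter \<sigma> l \<circ> eval_word \<sigma> w"
  by (simp add: eval_word_def)

lemma eval_word_append [simp]: "eval_word \<sigma> (v @ w) = eval_word \<sigma> v \<circ> eval_word \<sigma> w"
  by (induction v) (auto simp: comp_assoc)

lemma bij_eval_letter: "(\<And>x. bij (\<sigma> x)) \<Longrightarrow> bij (eval_letter \<sigma> l)"
  by (simp add: eval_letter_def bij_imp_bij_inv)

lemma bij_eval_word: "(\<And>x. bij (\<sigma> x)) \<Longrightarrow> bij (eval_word \<sigma> w)"
  by (induction w) (auto intro: bij_comp bij_eval_letter)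

lemma eval_letter_letter_inv:
  "(\<And>x. bij (\<sigma> x)) \<Longrightarrow> eval_letter \<sigma> (letter_inv l) = inv (eval_letter \<sigma> l)"
  by (auto simp: eval_letter_def letter_inv_def inv_inv_eq)

lemma eval_word_word_inv:
  assumes "\<And>x. bij (\<sigma> x)"
  shows "eval_word \<sigma> (word_inv w) = inv (eval_word \<sigma> w)"
proof (induction w)
  case (Cons l w)
  have "eval_word \<sigma> (word_inv (l # w)) = inv (eval_word \<sigma> w) \<circ> inv (eval_letter \<sigma> l)"
    using Cons.IH by (simp add: word_inv_def eval_letter_letter_inv assms)
  then show ?case
    by (simp only: eval_word_Cons o_inv_distrib[OF bij_eval_letter[of \<sigma>] bij_eval_word[of \<sigma>]] assms)
qed (simp add: word_inv_def)

lemma eval_word_free_step: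
  assumes "\<And>x. bij (\<sigma> x)" and "free_step v w"
  shows "eval_word \<sigma> v = eval_word \<sigma> w"
proof -
  obtain p q l where v: "v = p @ [l, letter_inv l] @ q" and w: "w = p @ q"
    using assms(2) unfolding free_step_def by blast
  have "bij (eval_letter \<sigma> l)"
    using assms(1) by (rule bij_eval_letter)
  then have "eval_letter \<sigma> l \<circ> eval_letter \<sigma> (letter_inv l) = id"
    by (simp add: eval_letter_letter_inv assms(1) bij_is_surj flip: surj_iff)
  then have cancel: "eval_letter \<sigma> l \<circ> (eval_letter \<sigma> (letter_inv l) \<circ> g) = g" for g
    by (simp flip: comp_assoc)
  show ?thesis
    unfolding v w by (simp add: cancel)
qed

lemma eval_word_free_eq:
  assumes "\<And>x. bij (\<sigma> x)" and "free_eq v w"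
  shows "eval_word \<sigma> v = eval_word \<sigma> w"
  using assms(2) unfolding free_eq_def
proof (induction rule: rtranclp_induct)
  case (step u w)
  then show ?case
    using eval_word_free_step[of \<sigma>, OF assms(1)] by (auto simp: symclp_def)
qed simp

lemma eval_letter_permutes: "(\<And>x. \<sigma> x permutes \<Omega>) \<Longrightarrow> eval_letter \<sigma> l permutes \<Omega>"
  by (simp add: eval_letter_def permutes_inv)

lemma eval_word_permutes: "(\<And>x. \<sigma> x permutes \<Omega>) \<Longrightarrow> eval_word \<sigma> w permutes \<Omega>"
  by (induction w) (auto intro: permutes_compose eval_letter_permutes)

text \<open>A free reduction may insert letters outside \<open>X\<close>, on which a homomorphism is
  unconstrained; to evaluate it on freely equal words, send those letters to the identity.\<close>
definition extend_by_id :: "'a set \<Rightarrow> ('a \<Rightarrow> nat \<Rightarrow> nat) \<Rightarrow> 'a \<Rightarrow> nat \<Rightarrow> nat" where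
  "extend_by_id X \<sigma> x = (if x \<in> X then \<sigma> x else id)"

lemma eval_word_extend_by_id: "w \<in> words X \<Longrightarrow> eval_word (extend_by_id X \<sigma>) w = eval_word \<sigma> w"
  by (induction w) (auto simp: words_def extend_by_id_def eval_letter_def)

lemma extend_by_id_permutes: "is_hom X \<Omega> \<sigma> \<Longrightarrow> extend_by_id X \<sigma> x permutes \<Omega>"
  by (simp add: is_hom_def extend_by_id_def permutes_id)

lemma eval_word_free_eq_hom:
  assumes "is_hom X \<Omega> \<sigma>" and "v \<in> words X" and "w \<in> words X" and "free_eq v w"
  shows "eval_word \<sigma> v = eval_word \<sigma> w"
proof -
  have "bij (extend_by_id X \<sigma> x)" for x
    using extend_by_id_permutes[OF assms(1)] by (rule permutes_bij)
  then have "eval_word (extend_by_id X \<sigma>) v = eval_word (extend_by_id X \<sigma>) w"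
    using assms(4) by (rule eval_word_free_eq)
  then show ?thesis
    by (simp add: eval_word_extend_by_id assms(2,3))
qed

lemma dOmega_le_1:
  assumes "finite \<Omega>"
  shows "dOmega \<Omega> f g \<le> 1"
proof -
  have "card {\<omega>\<in>\<Omega>. f \<omega> \<noteq> g \<omega>} \<le> card \<Omega>"
    using assms by (intro card_mono) auto
  then show ?thesis
    by (auto simp: dOmega_def divide_le_eq_1)
qed

lemma dOmega_comp_id_le:
  assumes "finite \<Omega>"
  shows "dOmega \<Omega> (f \<circ> g) id \<le> dOmega \<Omega> f id + dOmega \<Omega> g id"
proof -
  have "{\<omega>\<in>\<Omega>. (f \<circ> g) \<omega> \<noteq> id \<omega>} \<subseteq> {\<omega>\<in>\<Omega>. f \<omega> \<noteq> id \<omega>} \<union> {\<omega>\<in>\<Omega>. g \<omega> \<noteq> id \<omega>}"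
    by auto
  then have "card {\<omega>\<in>\<Omega>. (f \<circ> g) \<omega> \<noteq> id \<omega>} \<le> card ({\<omega>\<in>\<Omega>. f \<omega> \<noteq> id \<omega>} \<union> {\<omega>\<in>\<Omega>. g \<omega> \<noteq> id \<omega>})"
    using assms by (intro card_mono) auto
  also have "\<dots> \<le> card {\<omega>\<in>\<Omega>. f \<omega> \<noteq> id \<omega>} + card {\<omega>\<in>\<Omega>. g \<omega> \<noteq> id \<omega>}"
    by (rule card_Un_le)
  finally show ?thesis
    unfolding dOmega_def add_divide_distrib[symmetric] by (intro divide_right_mono) auto
qed

lemma dOmega_inv_id: "bij f \<Longrightarrow> dOmega \<Omega> (inv f) id = dOmega \<Omega> f id"
  unfolding dOmega_def by (metis bij_inv_eq_iff id_apply)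

lemma dOmega_conj_id:
  assumes "u permutes \<Omega>"
  shows "dOmega \<Omega> (u \<circ> f \<circ> inv u) id = dOmega \<Omega> f id"
proof -
  have moved: "(u \<circ> f \<circ> inv u) \<omega> \<noteq> \<omega> \<longleftrightarrow> f (inv u \<omega>) \<noteq> inv u \<omega>" for \<omega>
    using assms by (metis comp_apply permutes_inverses)
  have "{\<omega>\<in>\<Omega>. (u \<circ> f \<circ> inv u) \<omega> \<noteq> id \<omega>} = u ` {\<omega>\<in>\<Omega>. f \<omega> \<noteq> id \<omega>}"
  proof (intro equalityI subsetI)
    fix \<omega> assume "\<omega> \<in> {\<omega>\<in>\<Omega>. (u \<circ> f \<circ> inv u) \<omega> \<noteq> id \<omega>}"
    then have "inv u \<omega> \<in> {\<omega>\<in>\<Omega>. f \<omega> \<noteq> id \<omega>}"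
      using moved permutes_in_image[OF permutes_inv[OF assms]] by auto
    then show "\<omega> \<in> u ` {\<omega>\<in>\<Omega>. f \<omega> \<noteq> id \<omega>}"
      using permutes_inverses(1)[OF assms] by (metis image_eqI)
  qed (use assms moved in \<open>auto simp: permutes_inverses(2) permutes_in_image\<close>)
  then show ?thesis
    unfolding dOmega_def using permutes_inj[OF assms] by (simp add: card_image inj_on_subset)
qed

lemma dOmega_eval_conj_prod_le:
  assumes "finite \<Omega>" and "\<And>x. \<sigma> x permutes \<Omega>"
  shows "dOmega \<Omega> (eval_word \<sigma> (conj_prod ps)) id \<le> (\<Sum>(u, r, e)\<leftarrow>ps. dOmega \<Omega> (eval_word \<sigma> r) id)"
proof (induction ps)
  case Nil
  then show ?case by (simp add: conj_prod_def dOmega_def)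
next
  case (Cons p ps)
  obtain u r e where p: "p = (u, r, e)" by (cases p)
  have bij: "\<And>x. bij (\<sigma> x)" using assms(2) permutes_bij by blast
  define g where "g = eval_word \<sigma> (if e then r else word_inv r)"
  have g: "dOmega \<Omega> g id = dOmega \<Omega> (eval_word \<sigma> r) id"
    by (simp add: g_def eval_word_word_inv bij dOmega_inv_id bij_eval_word)
  have "eval_word \<sigma> (conj_prod (p # ps)) =
      (eval_word \<sigma> u \<circ> g \<circ> inv (eval_word \<sigma> u)) \<circ> eval_word \<sigma> (conj_prod ps)"
    by (simp add: p conj_prod_def g_def eval_word_word_inv[OF bij] comp_assoc)
  then have "dOmega \<Omega> (eval_word \<sigma> (conj_prod (p # ps))) id \<le>
      dOmega \<Omega> (eval_word \<sigma> u \<circ> g \<circ> inv (eval_word \<sigma> u)) id + dOmega \<Omega> (eval_word \<sigma> (conj_prod ps)) id"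
    using dOmega_comp_id_le[OF assms(1)] by simp
  also have "\<dots> = dOmega \<Omega> (eval_word \<sigma> r) id + dOmega \<Omega> (eval_word \<sigma> (conj_prod ps)) id"
    using dOmega_conj_id[OF eval_word_permutes[of \<sigma>, OF assms(2)]] g by simp
  also have "\<dots> \<le> dOmega \<Omega> (eval_word \<sigma> r) id + (\<Sum>(u, r, e)\<leftarrow>ps. dOmega \<Omega> (eval_word \<sigma> r) id)"
    using Cons.IH by (rule add_left_mono)
  finally show ?case
    by (simp only: p list.map sum_list.Cons prod.case)
qed

lemma relator_in_kernel:
  assumes "r \<in> R" and "r \<in> words X"
  shows "r \<in> kernel X R"
proof -
  have "conj_prod [([], r, True)] = r"
    by (simp add: conj_prod_def word_inv_def)
  moreover have "valid_pieces X R [([], r, True)]"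
    using assms(1) by (simp add: valid_pieces_def words_def)
  ultimately show ?thesis
    using assms(2) by (auto simp: kernel_def free_eq_def intro!: exI[of _ "[([], r, True)]"])
qed

lemma area_witness:
  assumes "w \<in> kernel X R"
  obtains ps where "length ps = area X R w" and "valid_pieces X R ps" and "free_eq w (conj_prod ps)"
proof -
  have "\<exists>m ps. length ps = m \<and> valid_pieces X R ps \<and> free_eq w (conj_prod ps)"
    using assms by (auto simp: kernel_def)
  then have "\<exists>ps. length ps = area X R w \<and> valid_pieces X R ps \<and> free_eq w (conj_prod ps)"
    unfolding area_def by (rule LeastI_ex)
  then show ?thesis
    using that by blast
qed

lemma area_Nil: "area X R [] = 0"
  unfolding area_def
  by (rule Least_eq_0, rule exI[of _ "[]"]) (simp add: valid_pieces_def conj_prod_def free_eq_def)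

lemma area_le_dehn_nat:
  assumes "finite X" and "w \<in> kernel X R" and "reduced w" and "length w \<le> n"
  shows "area X R w \<le> dehn_nat X R n"
proof -
  have "{w. w \<in> kernel X R \<and> reduced w \<and> length w \<le> n} \<subseteq> {w. set w \<subseteq> X \<times> UNIV \<and> length w \<le> n}"
    by (auto simp: kernel_def words_def)
  moreover have "finite {w. set w \<subseteq> X \<times> (UNIV :: bool set) \<and> length w \<le> n}"
    using assms(1) by (intro finite_lists_length_le) simp
  ultimately have "finite {w. w \<in> kernel X R \<and> reduced w \<and> length w \<le> n}"
    by (rule finite_subset)
  then show ?thesis
    unfolding dehn_nat_def using assms(2-4) by (intro Max_ge) (auto simp: setcompr_eq_image)
qed

lemma dOmega_eval_kernel_less:
  assumes "finite \<Omega>" and "is_hom X \<Omega> \<rho>" and "R \<subseteq> words X"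
    and "almost_solution \<Omega> \<delta>' R \<rho>" and "w \<in> kernel X R"
    and "real (area X R w) * \<delta>' \<le> \<delta>" and "0 < \<delta>"
  shows "dOmega \<Omega> (eval_word \<rho> w) id < \<delta>"
proof -
  obtain ps where len: "length ps = area X R w" and valid: "valid_pieces X R ps"
    and eq: "free_eq w (conj_prod ps)"
    using assms(5) by (rule area_witness)
  define \<sigma> where "\<sigma> = extend_by_id X \<rho>"
  have perm: "\<sigma> x permutes \<Omega>" for x
    unfolding \<sigma>_def using assms(2) by (rule extend_by_id_permutes)
  have "eval_word \<rho> w = eval_word \<sigma> w"
    using assms(5) by (simp add: \<sigma>_def eval_word_extend_by_id kernel_def)
  also have "\<dots> = eval_word \<sigma> (conj_prod ps)"
    using permutes_bij[OF perm] eq by (rule eval_word_free_eq)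
  finally have w: "eval_word \<rho> w = eval_word \<sigma> (conj_prod ps)" .
  show ?thesis
  proof (cases "ps = []")
    case True
    then show ?thesis
      using w assms(7) by (simp add: conj_prod_def dOmega_def)
  next
    case False
    have "dOmega \<Omega> (eval_word \<sigma> r) id < \<delta>'" if "(u, r, e) \<in> set ps" for u r e
    proof -
      have "r \<in> R"
        using valid that by (auto simp: valid_pieces_def)
      then show ?thesis
        using assms(3,4) by (auto simp: \<sigma>_def eval_word_extend_by_id almost_solution_def)
    qed
    then have "(\<Sum>(u, r, e)\<leftarrow>ps. dOmega \<Omega> (eval_word \<sigma> r) id) < (\<Sum>_\<leftarrow>ps. \<delta>')"
      using False by (intro sum_list_strict_mono) auto
    then have "dOmega \<Omega> (eval_word \<sigma> (conj_prod ps)) id < real (length ps) * \<delta>'"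
      using dOmega_eval_conj_prod_le[of \<Omega> \<sigma> ps, OF assms(1) perm] by (simp add: sum_list_triv)
    then show ?thesis
      using w len assms(6) by simp
  qed
qed

lemma good_pair_relators:
  assumes "good_pair X R \<delta> E \<epsilon>" and "E \<subseteq> kernel X R" and "R \<subseteq> words X"
    and "\<And>r. r \<in> E \<Longrightarrow> area X R r \<le> D" and "real D * \<delta>' \<le> \<delta>" and "0 < \<delta>" and "0 \<le> \<delta>'"
  shows "good_pair X R \<delta>' R \<epsilon>"
  unfolding good_pair_def
proof (intro allI impI)
  fix \<Omega> :: "nat set" and \<rho>
  assume fin: "finite \<Omega>" and hom: "is_hom X \<Omega> \<rho>" and almost: "almost_solution \<Omega> \<delta>' R \<rho>"
  have "real (area X R r) * \<delta>' \<le> \<delta>" if "r \<in> E" for r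
    using assms(4)[OF that] assms(5,7) by (meson mult_right_mono of_nat_le_iff order_trans)
  then have "almost_solution \<Omega> \<delta> E \<rho>"
    unfolding almost_solution_def
    using dOmega_eval_kernel_less[OF fin hom assms(3) almost] assms(2,6) by blast
  then show "\<exists>\<phi>. is_hom X \<Omega> \<phi> \<and> is_solution \<Omega> (kernel X R) \<phi> \<and> eps_close X \<Omega> \<epsilon> \<rho> \<phi>"
    using assms(1) fin hom unfolding good_pair_def by blast
qed

text \<open>Since \<open>dOmega\<close> never exceeds 1, for \<open>\<delta> > 1\<close> every homomorphism is a
  \<open>(\<delta>, E)\<close>-almost-solution.\<close>
lemma good_pair_beyond_1:
  assumes "good_pair X R \<delta> E \<epsilon>" and "1 < \<delta>"
  shows "good_pair X R \<delta>' E' \<epsilon>"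
proof -
  have "almost_solution \<Omega> \<delta> E \<rho>" if "finite \<Omega>" for \<Omega> and \<rho> :: "'a \<Rightarrow> nat \<Rightarrow> nat"
    unfolding almost_solution_def using dOmega_le_1[OF that] assms(2) by (meson le_less_trans)
  then show ?thesis
    using assms(1) unfolding good_pair_def by blast
qed

lemma H_fun_le:
  assumes "0 < \<delta>" and "good_pair X R \<delta> R (1 / x)"
  shows "H_fun X R x \<le> 1 / \<delta>"
  unfolding H_fun_def using assms by (intro cInf_lower bdd_belowI[of _ 0]) auto

lemma H_fun_greatest:
  assumes "0 < \<delta>\<^sub>0" and "good_pair X R \<delta>\<^sub>0 R (1 / x)"
    and "\<And>\<delta>. 0 < \<delta> \<Longrightarrow> good_pair X R \<delta> R (1 / x) \<Longrightarrow> c \<le> 1 / \<delta>"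
  shows "c \<le> H_fun X R x"
  unfolding H_fun_def using assms by (intro cInf_greatest) auto

lemma H_fun_eq_0:
  assumes "\<And>\<delta>. 0 < \<delta> \<Longrightarrow> good_pair X R \<delta> R (1 / x)"
  shows "H_fun X R x = 0"
proof (rule antisym)
  show "H_fun X R x \<le> 0"
  proof (rule field_le_epsilon)
    fix e :: real
    assume "0 < e"
    then show "H_fun X R x \<le> 0 + e"
      using H_fun_le[of "1 / e"] assms[of "1 / e"] by simp
  qed
  show "0 \<le> H_fun X R x"
    using assms by (intro H_fun_greatest[of 1]) auto
qed

lemma set_norm_nonneg: "0 \<le> set_norm E"
  unfolding set_norm_def by (rule of_nat_0_le_iff)

lemma length_le_set_norm_div:
  assumes "finite E" and "r \<in> E" and "0 < \<delta>" and "\<delta> \<le> 1"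
  shows "real (length r) \<le> set_norm E / \<delta>"
proof -
  have "real (length r) \<le> set_norm E"
    unfolding set_norm_def of_nat_le_iff using assms(1,2) by (intro member_le_sum) auto
  also have "\<dots> \<le> set_norm E / \<delta>"
    using assms(3) mult_left_le[OF assms(4) set_norm_nonneg] by (simp add: le_divide_eq)
  finally show ?thesis .
qed

lemma F_fun_le:
  assumes "(\<delta>, E) \<in> admissible_pairs X R x"
  shows "F_fun X R x \<le> set_norm E / \<delta>"
  unfolding F_fun_def using assms
  by (intro cInf_lower bdd_belowI[of _ 0])
    (force, auto simp: admissible_pairs_def set_norm_nonneg)

lemma F_fun_nonneg:
  assumes "admissible_pairs X R x \<noteq> {}"
  shows "0 \<le> F_fun X R x"
  unfolding F_fun_def using assms
  by (intro cInf_greatest) (auto simp: admissible_pairs_def set_norm_nonneg)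

lemma F_fun_less_obtain:
  assumes "admissible_pairs X R x \<noteq> {}" and "F_fun X R x < y"
  obtains \<delta> E where "(\<delta>, E) \<in> admissible_pairs X R x" and "set_norm E / \<delta> < y"
proof -
  have "\<exists>v\<in>(\<lambda>(\<delta>, E). set_norm E / \<delta>) ` admissible_pairs X R x. v < y"
    using assms unfolding F_fun_def by (intro cInf_lessD) auto
  then show ?thesis
    using that by auto
qed

lemma good_pair_relators_exists:
  assumes "R \<subseteq> words X" and "(\<delta>, E) \<in> admissible_pairs X R x"
  obtains \<delta>' where "0 < \<delta>'" and "good_pair X R \<delta>' R (1 / x)"
proof
  define D where "D = (\<Sum>r\<in>E. area X R r)"
  have "finite E" and "0 < \<delta>"
    using assms(2) by (auto simp: admissible_pairs_def)
  then show "0 < \<delta> / (real D + 1)"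
    by simp
  have "area X R r \<le> D" if "r \<in> E" for r
    unfolding D_def using \<open>finite E\<close> that by (intro member_le_sum) auto
  then show "good_pair X R (\<delta> / (real D + 1)) R (1 / x)"
    using assms \<open>0 < \<delta>\<close> unfolding admissible_pairs_def
    by (intro good_pair_relators[where D = D]) (auto simp: field_simps)
qed

lemma H_fun_le_admissible:
  assumes "R \<subseteq> words X" and "(\<delta>, E) \<in> admissible_pairs X R x"
    and "\<And>r. r \<in> E \<Longrightarrow> area X R r \<le> D"
  shows "H_fun X R x \<le> real D * (set_norm E / \<delta>)"
proof -
  have \<delta>: "0 < \<delta>" "\<delta> \<le> 1" and E: "finite E" "E \<subseteq> kernel X R"
    and good: "good_pair X R \<delta> E (1 / x)"
    using assms(2) by (auto simp: admissible_pairs_def)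
  show ?thesis
  proof (cases "D = 0 \<or> set_norm E = 0")
    case True
    have "area X R r \<le> 0" if "r \<in> E" for r
      using True assms(3)[OF that] length_le_set_norm_div[OF E(1) that \<delta>] by (auto simp: area_Nil)
    then have "H_fun X R x = 0"
      using \<delta>(1) by (intro H_fun_eq_0 good_pair_relators[OF good E(2) assms(1), where D = 0]) auto
    moreover have "0 \<le> real D * (set_norm E / \<delta>)"
      using \<delta>(1) set_norm_nonneg by (intro mult_nonneg_nonneg divide_nonneg_pos) auto
    ultimately show ?thesis
      by simp
  next
    case False
    then have D: "0 < real D" and norm: "1 \<le> set_norm E"
      unfolding set_norm_def by (auto simp del: of_nat_sum)
    have "good_pair X R (\<delta> / real D) R (1 / x)"
      by (rule good_pair_relators[OF good E(2) assms(1,3)]) (use \<delta>(1) D in auto)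
    then have "H_fun X R x \<le> 1 / (\<delta> / real D)"
      using \<delta>(1) D by (intro H_fun_le) auto
    also have "\<dots> = real D / \<delta>"
      by simp
    also have "\<dots> \<le> real D * (set_norm E / \<delta>)"
      using norm \<delta>(1) D by (simp add: divide_right_mono)
    finally show ?thesis .
  qed
qed

text \<open>If \<open>(\<delta>, E)\<close> nearly attains \<open>F = F_fun X R x\<close>, every member of \<open>E\<close> has length
  at most \<open>\<lfloor>F\<rfloor>\<close>, hence area at most \<open>dehn_nat X R \<lfloor>F\<rfloor>\<close>.\<close>
lemma H_fun_le_F_fun_dehn:
  assumes "finite X" and "R \<subseteq> words X" and "admissible_pairs X R x \<noteq> {}"
  shows "H_fun X R x \<le> F_fun X R x * dehn X R (F_fun X R x)"
proof -
  define F where "F = F_fun X R x"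
  define n where "n = nat \<lfloor>F\<rfloor>"
  define D where "D = dehn_nat X R n"
  have "0 \<le> F"
    unfolding F_def using assms(3) by (rule F_fun_nonneg)
  then have F_less: "F < real n + 1"
    unfolding n_def by linarith
  have bound: "H_fun X R x \<le> real D * y" if "F < y" "y < real n + 1" for y
  proof -
    obtain \<delta> E where adm: "(\<delta>, E) \<in> admissible_pairs X R x" and less: "set_norm E / \<delta> < y"
      using assms(3) \<open>F < y\<close> unfolding F_def by (rule F_fun_less_obtain)
    have area: "area X R r \<le> D" if "r \<in> E" for r
    proof -
      have "real (length r) < real n + 1"
        using length_le_set_norm_div[of E r \<delta>] adm that less \<open>y < real n + 1\<close>
        by (auto simp: admissible_pairs_def)
      then show ?thesis
        unfolding D_def using adm that
        by (intro area_le_dehn_nat[OF assms(1)]) (auto simp: admissible_pairs_def)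
    qed
    have "H_fun X R x \<le> real D * (set_norm E / \<delta>)"
      using assms(2) adm area by (rule H_fun_le_admissible)
    also have "\<dots> \<le> real D * y"
      using less by (intro mult_left_mono) auto
    finally show ?thesis .
  qed
  have "H_fun X R x \<le> real D * F"
  proof (cases "D = 0")
    case True
    have "H_fun X R x \<le> real D * ((F + (real n + 1)) / 2)"
      using F_less by (intro bound) auto
    then show ?thesis
      using True by simp
  next
    case False
    then have D: "0 < real D"
      by simp
    have "H_fun X R x / real D \<le> F"
    proof (rule dense_ge_bounded[OF F_less])
      fix y
      assume "F < y" and "y < real n + 1"
      then have "H_fun X R x \<le> real D * y"
        by (rule bound)
      then show "H_fun X R x / real D \<le> y"
        using D by (simp add: pos_divide_le_eq mult.commute)
    qed
    then show ?thesis
      using D by (simp add: pos_divide_le_eq mult.commute)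
  qed
  then show ?thesis
    by (simp add: F_def D_def n_def dehn_def mult.commute)
qed

lemma F_fun_le_set_norm_div:
  assumes "finite R" and "R \<subseteq> kernel X R" and "\<forall>r\<in>R. reduced r"
    and "0 < \<delta>" and "good_pair X R \<delta> R (1 / x)"
  shows "F_fun X R x \<le> set_norm R / \<delta>"
proof (cases "\<delta> \<le> 1")
  case True
  then have "(\<delta>, R) \<in> admissible_pairs X R x"
    using assms by (simp add: admissible_pairs_def)
  then show ?thesis
    by (rule F_fun_le)
next
  case False
  then have "(1, {}) \<in> admissible_pairs X R x"
    using good_pair_beyond_1[OF assms(5)] by (simp add: admissible_pairs_def)
  then have "F_fun X R x \<le> 0"
    using F_fun_le by (fastforce simp: set_norm_def)
  also have "0 \<le> set_norm R / \<delta>"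
    using assms(4) by (simp add: set_norm_nonneg)
  finally show ?thesis .
qed

lemma F_fun_div_set_norm_le_H_fun:
  assumes "finite R" and "\<forall>r\<in>R. r \<in> words X \<and> reduced r"
    and "admissible_pairs X R x \<noteq> {}"
  shows "(1 / set_norm R) * F_fun X R x \<le> H_fun X R x"
proof -
  have RX: "R \<subseteq> words X" and RK: "R \<subseteq> kernel X R"
    using assms(2) relator_in_kernel by auto
  obtain \<delta> E where "(\<delta>, E) \<in> admissible_pairs X R x"
    using assms(3) by auto
  then obtain \<delta>\<^sub>0 where "0 < \<delta>\<^sub>0" and "good_pair X R \<delta>\<^sub>0 R (1 / x)"
    using RX by (blast elim: good_pair_relators_exists)
  then show ?thesis
  proof (rule H_fun_greatest)
    fix \<delta> :: real
    assume "0 < \<delta>" and "good_pair X R \<delta> R (1 / x)"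
    then have "F_fun X R x \<le> set_norm R / \<delta>"
      using assms RK by (intro F_fun_le_set_norm_div) auto
    then show "1 / set_norm R * F_fun X R x \<le> 1 / \<delta>"
      using \<open>0 < \<delta>\<close> set_norm_nonneg[of R]
      by (cases "set_norm R = 0") (auto simp: field_simps)
  qed
qed

lemma is_solution_kernel_if_pi_iso:
  assumes "pi_iso X R" and "is_hom X \<Omega> \<rho>"
  shows "is_solution \<Omega> (kernel X R) \<rho>"
  unfolding is_solution_def
proof (intro ballI)
  fix w \<omega>
  assume "w \<in> kernel X R"
  then have "eval_word \<rho> w = eval_word \<rho> []"
    using assms by (intro eval_word_free_eq_hom[OF assms(2)]) (auto simp: kernel_def pi_iso_def words_def)
  then show "eval_word \<rho> w \<omega> = \<omega>"
    by simp
qed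

lemma H_fun_pi_iso:
  assumes "pi_iso X R" and "0 < x"
  shows "H_fun X R x = 0"
proof (rule H_fun_eq_0)
  fix \<delta> :: real
  have "eps_close X \<Omega> (1 / x) \<rho> \<rho>" for \<Omega> \<rho>
    using assms(2) by (simp add: eps_close_def dOmega_def)
  then show "good_pair X R \<delta> R (1 / x)"
    using is_solution_kernel_if_pi_iso[OF assms(1)] unfolding good_pair_def by blast
qed

theorem proposition2p9:
  fixes X :: "'a set" and R :: "'a word set"
  assumes "finite X" and "finite R"
    and "\<forall>r\<in>R. r \<in> words X \<and> reduced r"
    and "stable X R"
  shows "(\<not> pi_iso X R \<longrightarrow> (\<forall>x::real. x \<ge> 1 \<longrightarrow>
            (1 / set_norm R) * F_fun X R x \<le> H_fun X R x \<and>
            H_fun X R x \<le> F_fun X R x * dehn X R (F_fun X R x))) \<and>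
         (pi_iso X R \<longrightarrow> (\<forall>x::real. x \<ge> 1 \<longrightarrow> H_fun X R x = 0))"
proof -
  have RX: "R \<subseteq> words X"
    using assms(3) by auto
  have adm: "admissible_pairs X R x \<noteq> {}" if "x \<ge> 1" for x :: real
    using assms(4) that unfolding stable_def by auto
  have "(1 / set_norm R) * F_fun X R x \<le> H_fun X R x \<and>
      H_fun X R x \<le> F_fun X R x * dehn X R (F_fun X R x)" if "x \<ge> 1" for x :: real
    using F_fun_div_set_norm_le_H_fun[OF assms(2,3) adm[OF that]]
      H_fun_le_F_fun_dehn[OF assms(1) RX adm[OF that]] by blast
  moreover have "H_fun X R x = 0" if "pi_iso X R" and "x \<ge> 1" for x :: real
    using that by (intro H_fun_pi_iso) auto
  ultimately show ?thesis
    by blast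
qed

end
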